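(* Let $p,p_1,\dots,p_n$ be distinct propositional variables ($n\geq 1$). Then $\bigwedge_{i=1}^n([0]p_i\to p_i)\to p\ \vdash_{\mathbf{GL}}\ Q^n(p)\leftrightarrow p$, i.e. the formula $Q^n(p)\leftrightarrow p$ is derivable from the axioms of $\mathbf{GL}$ and the hypothesis $\bigwedge_{i=1}^n([0]p_i\to p_i)\to p$ using modus ponens and necessitation.
   Context: $\mathbf{GL}$ is Gödel–Löb provability logic with the single modality $[0]$: classical tautologies, $[0](\phi\to\psi)\to([0]\phi\to[0]\psi)$, $[0]([0]\phi\to\phi)\to[0]\phi$, rules modus ponens and necessitation. For a finite set $\Gamma$, $\Gamma\vdash_{\mathbf{GL}}\phi$ means $\phi$ is derivable from the axioms and $\Gamma$ by modus ponens and necessitation (necessitation may be applied to anything derived, including hypotheses). Define $Q_1(p):=p$, $Q_{i+1}(p):=p\lor[0]Q_i(p)$, and $Q^n(p):=\bigwedge_{i=1}^n([0]Q_i(p)\to Q_i(p))$. *)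

theory Defs
  imports Main
begin

text \<open>Modal formulas over propositional variables indexed by nat, with the single modality [0].\<close>
datatype fm = Var nat | Bot | Imp fm fm | Box fm

definition Neg :: "fm \<Rightarrow> fm" where "Neg a = Imp a Bot"
definition Top :: fm where "Top = Imp Bot Bot"
definition Or :: "fm \<Rightarrow> fm \<Rightarrow> fm" where "Or a b = Imp (Neg a) b"
definition And :: "fm \<Rightarrow> fm \<Rightarrow> fm" where "And a b = Neg (Imp a (Neg b))"
definition Iff :: "fm \<Rightarrow> fm \<Rightarrow> fm" where "Iff a b = And (Imp a b) (Imp b a)"

fun BigAnd :: "fm list \<Rightarrow> fm" where
  "BigAnd [] = Top"
| "BigAnd [a] = a"
| "BigAnd (a # b # xs) = And a (BigAnd (b # xs))"

fun peval :: "(nat \<Rightarrow> bool) \<Rightarrow> (fm \<Rightarrow> bool) \<Rightarrow> fm \<Rightarrow> bool" where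
  "peval v b (Var n) = v n"
| "peval v b Bot = False"
| "peval v b (Imp x y) = (peval v b x \<longrightarrow> peval v b y)"
| "peval v b (Box x) = b x"

definition tautology :: "fm \<Rightarrow> bool" where
  "tautology a \<longleftrightarrow> (\<forall>v b. peval v b a)"

text \<open>Derivability in GL from a set of hypotheses, with MP and necessitation
  applicable to everything derived (including hypotheses).\<close>
inductive GL_der :: "fm set \<Rightarrow> fm \<Rightarrow> bool" where
  taut: "tautology a \<Longrightarrow> GL_der G a"
| K: "GL_der G (Imp (Box (Imp a b)) (Imp (Box a) (Box b)))"
| Loeb: "GL_der G (Imp (Box (Imp (Box a) a)) (Box a))"
| hyp: "a \<in> G \<Longrightarrow> GL_der G a"
| MP: "GL_der G (Imp a b) \<Longrightarrow> GL_der G a \<Longrightarrow> GL_der G b"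
| Nec: "GL_der G a \<Longrightarrow> GL_der G (Box a)"

fun Q :: "nat \<Rightarrow> fm \<Rightarrow> fm" where
  "Q 0 p = p"
| "Q (Suc 0) p = p"
| "Q (Suc (Suc i)) p = Or p (Box (Q (Suc i) p))"

definition Qn :: "nat \<Rightarrow> fm \<Rightarrow> fm" where
  "Qn n p = BigAnd (map (\<lambda>i. Imp (Box (Q i p)) (Q i p)) [1..<Suc n])"

end

theory Submission
  imports Defs
begin

text \<open>Write \<open>H\<close> for the hypothesis \<open>\<And>(\<box>A\<^sub>i \<rightarrow> A\<^sub>i) \<rightarrow> P\<close>. For a set \<open>X\<close> of the \<open>A\<^sub>i\<close> missing
  at most \<open>m\<close> of them, \<open>H\<close> proves \<open>\<And>(X \<and> \<box>X) \<rightarrow> Q\<^sub>m\<^sub>+\<^sub>1(P)\<close>, by induction on \<open>m\<close>: if \<open>P\<close>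
  fails, \<open>H\<close> yields some \<open>A\<^sub>i\<close> with \<open>\<box>A\<^sub>i\<close> and \<open>\<not>A\<^sub>i\<close>, so \<open>A\<^sub>i \<notin> X\<close>; boxing the induction
  hypothesis for \<open>X \<union> {A\<^sub>i}\<close> and using \<open>\<box>A \<rightarrow> \<box>\<box>A\<close> gives \<open>\<box>Q\<^sub>m\<^sub>+\<^sub>1(P)\<close>. With \<open>X = \<emptyset>\<close>
  we get \<open>Q\<^sub>n\<^sub>+\<^sub>1(P)\<close>, and propositionally \<open>Q\<^sub>n\<^sub>+\<^sub>1(P)\<close> makes \<open>Q\<^sup>n(P)\<close> equivalent to \<open>P\<close>: if \<open>P\<close>
  fails, the reflection conditions in \<open>Q\<^sup>n(P)\<close> falsify \<open>Q\<^sub>1(P), \<dots>, Q\<^sub>n\<^sub>+\<^sub>1(P)\<close> in turn.\<close>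

fun Imps :: "fm list \<Rightarrow> fm \<Rightarrow> fm" where
  "Imps [] c = c"
| "Imps (a # as) c = Imp a (Imps as c)"

lemma peval_derived_connectives [simp]:
  "peval v b (Neg x) = (\<not> peval v b x)"
  "peval v b Top"
  "peval v b (Or x y) = (peval v b x \<or> peval v b y)"
  "peval v b (And x y) = (peval v b x \<and> peval v b y)"
  "peval v b (Iff x y) = (peval v b x = peval v b y)"
  by (auto simp: Neg_def Top_def Or_def And_def Iff_def)

lemma peval_BigAnd [simp]: "peval v b (BigAnd xs) = (\<forall>x\<in>set xs. peval v b x)"
  by (induction xs rule: BigAnd.induct) auto

lemma peval_Imps [simp]: "peval v b (Imps as c) = ((\<forall>a\<in>set as. peval v b a) \<longrightarrow> peval v b c)"
  by (induction as) auto

lemma peval_Q_if: "peval v b P \<Longrightarrow> peval v b (Q k P)"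
  by (induction k P rule: Q.induct) auto

lemma peval_Q_not:
  assumes "\<not> peval v b P" and "\<forall>i\<in>{1..<k}. b (Q i P) \<longrightarrow> peval v b (Q i P)"
  shows "\<not> peval v b (Q k P)"
  using assms by (induction k P rule: Q.induct) auto

lemma peval_Qn: "peval v b (Qn n P) = (\<forall>i\<in>{1..<Suc n}. b (Q i P) \<longrightarrow> peval v b (Q i P))"
  by (auto simp: Qn_def)

lemma GL_der_Imps_MP: "GL_der G (Imps Fs c) \<Longrightarrow> \<forall>f\<in>set Fs. GL_der G f \<Longrightarrow> GL_der G c"
  by (induction Fs) (auto intro: GL_der.MP)

lemma GL_der_taut_consequence:
  assumes "\<forall>f\<in>set Fs. GL_der G f"
    and "\<And>v b. \<forall>f\<in>set Fs. peval v b f \<Longrightarrow> peval v b c"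
  shows "GL_der G c"
proof -
  have "GL_der G (Imps Fs c)"
    by (rule GL_der.taut) (use assms(2) in \<open>simp add: tautology_def\<close>)
  then show ?thesis using assms(1) by (rule GL_der_Imps_MP)
qed

lemma GL_der_Box_mono: "GL_der G (Imp a c) \<Longrightarrow> GL_der G (Imp (Box a) (Box c))"
  by (meson GL_der.K GL_der.MP GL_der.Nec)

lemma GL_der_Box_Imps_distrib: "GL_der G (Imp (Box (Imps as c)) (Imps (map Box as) (Box c)))"
proof (induction as)
  case Nil
  show ?case by (rule GL_der.taut) (simp add: tautology_def)
next
  case (Cons a as)
  have "GL_der G (Imp (Box (Imp a (Imps as c))) (Imp (Box a) (Box (Imps as c))))"
    by (rule GL_der.K)
  with Cons.IH show ?case
    by (intro GL_der_taut_consequence[where Fs =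
          "[Imp (Box (Imp a (Imps as c))) (Imp (Box a) (Box (Imps as c))),
            Imp (Box (Imps as c)) (Imps (map Box as) (Box c))]"]) auto
qed

lemma GL_der_Box_Imps: "GL_der G (Imps as c) \<Longrightarrow> GL_der G (Imps (map Box as) (Box c))"
  by (meson GL_der.MP GL_der.Nec GL_der_Box_Imps_distrib)

text \<open>The usual derivation of axiom 4 from Loeb's axiom, applied to \<open>a \<and> \<box>a\<close>.\<close>

lemma GL_der_Box_Box: "GL_der G (Imp (Box a) (Box (Box a)))"
proof -
  define B where "B = And a (Box a)"
  have B_a: "GL_der G (Imp (Box B) (Box a))" and B_Box_a: "GL_der G (Imp (Box B) (Box (Box a)))"
    by (rule GL_der_Box_mono, rule GL_der.taut, simp add: tautology_def B_def)+
  have "GL_der G (Imp a (Imp (Box B) B))"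
    by (rule GL_der_taut_consequence[where Fs = "[Imp (Box B) (Box a)]"]) (use B_a in \<open>auto simp: B_def\<close>)
  then have a_refl: "GL_der G (Imp (Box a) (Box (Imp (Box B) B)))"
    by (rule GL_der_Box_mono)
  have Loeb: "GL_der G (Imp (Box (Imp (Box B) B)) (Box B))"
    by (rule GL_der.Loeb)
  from a_refl Loeb B_Box_a show ?thesis
    by (intro GL_der_taut_consequence[where Fs =
          "[Imp (Box a) (Box (Imp (Box B) B)), Imp (Box (Imp (Box B) B)) (Box B), Imp (Box B) (Box (Box a))]"])
      auto
qed

lemma GL_der_Box_Imps_strong:
  assumes "GL_der G (Imps (as @ map Box as) c)"
  shows "GL_der G (Imps (map Box as) (Box c))"
proof -
  have "GL_der G (Imps (map Box as @ map Box (map Box as)) (Box c))"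
    using GL_der_Box_Imps[OF assms] by simp
  then show ?thesis
    using GL_der_Box_Box
    by (intro GL_der_taut_consequence[where Fs =
          "Imps (map Box as @ map Box (map Box as)) (Box c) # map (\<lambda>a. Imp (Box a) (Box (Box a))) as"])
      auto
qed

lemma GL_der_reflection_hyp_step:
  assumes hyp: "Imp (BigAnd (map (\<lambda>a. Imp (Box a) a) as)) P \<in> G"
    and boxed: "\<And>a. a \<in> set as - set xs \<Longrightarrow> GL_der G (Imp (Box a) (Imps (map Box xs) (Box c)))"
  shows "GL_der G (Imps (xs @ map Box xs) (Or P (Box c)))"
proof -
  let ?H = "Imp (BigAnd (map (\<lambda>a. Imp (Box a) a) as)) P"
  let ?boxed = "\<lambda>a. Imp (Box a) (Imps (map Box xs) (Box c))"
  show ?thesis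
  proof (rule GL_der_taut_consequence[where Fs = "?H # map ?boxed (filter (\<lambda>a. a \<notin> set xs) as)"])
    show "\<forall>f\<in>set (?H # map ?boxed (filter (\<lambda>a. a \<notin> set xs) as)). GL_der G f"
      using GL_der.hyp[OF hyp] boxed by auto
  next
    fix v b
    assume holds: "\<forall>f\<in>set (?H # map ?boxed (filter (\<lambda>a. a \<notin> set xs) as)). peval v b f"
    show "peval v b (Imps (xs @ map Box xs) (Or P (Box c)))"
      unfolding peval_Imps
    proof
      assume xs_hold: "\<forall>x\<in>set (xs @ map Box xs). peval v b x"
      show "peval v b (Or P (Box c))"
      proof (cases "peval v b P")
        case False
        with holds obtain a where a: "a \<in> set as" "b a" "\<not> peval v b a"
          by auto
        with xs_hold have "a \<notin> set xs"
          by auto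
        with a holds have "peval v b (?boxed a)"
          by auto
        with a xs_hold show ?thesis
          by auto
      qed simp
    qed
  qed
qed

lemma GL_der_Q_from_reflection_hyp:
  assumes hyp: "Imp (BigAnd (map (\<lambda>a. Imp (Box a) a) as)) P \<in> G"
    and "card (set as - set xs) \<le> m"
  shows "GL_der G (Imps (xs @ map Box xs) (Q (Suc m) P))"
  using assms(2)
proof (induction m arbitrary: xs)
  case 0
  then have "set as \<subseteq> set xs" by auto
  then show ?case
    using GL_der.hyp[OF hyp]
    by (intro GL_der_taut_consequence[where Fs = "[Imp (BigAnd (map (\<lambda>a. Imp (Box a) a) as)) P]"])
      auto
next
  case (Suc m)
  have "GL_der G (Imp (Box a) (Imps (map Box xs) (Box (Q (Suc m) P))))"
    if "a \<in> set as - set xs" for a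
  proof -
    have "set as - set (a # xs) = (set as - set xs) - {a}"
      by auto
    then have "card (set as - set (a # xs)) \<le> m"
      using Suc.prems card_Diff_singleton[OF that] by simp
    then have "GL_der G (Imps ((a # xs) @ map Box (a # xs)) (Q (Suc m) P))"
      by (rule Suc.IH)
    then have "GL_der G (Imps (map Box (a # xs)) (Box (Q (Suc m) P)))"
      by (rule GL_der_Box_Imps_strong)
    then show ?thesis
      by simp
  qed
  then show ?case
    using GL_der_reflection_hyp_step[OF hyp] by simp
qed

lemma GL_der_Qn_iff:
  assumes "GL_der G (Q (Suc n) P)"
  shows "GL_der G (Iff (Qn n P) P)"
proof (rule GL_der_taut_consequence[where Fs = "[Q (Suc n) P]"])
  show "\<forall>f\<in>set [Q (Suc n) P]. GL_der G f"
    using assms by simp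
next
  fix v b
  assume "\<forall>f\<in>set [Q (Suc n) P]. peval v b f"
  then show "peval v b (Iff (Qn n P) P)"
    using peval_Q_if[of v b P] peval_Q_not[of v b P "Suc n"] by (auto simp: peval_Qn)
qed

theorem mainTheorem11:
  fixes p :: nat and ps :: "nat list"
  assumes "length ps \<ge> 1" and "distinct ps" and "p \<notin> set ps"
  shows "GL_der {Imp (BigAnd (map (\<lambda>q. Imp (Box (Var q)) (Var q)) ps)) (Var p)}
           (Iff (Qn (length ps) (Var p)) (Var p))"
proof -
  let ?H = "Imp (BigAnd (map (\<lambda>q. Imp (Box (Var q)) (Var q)) ps)) (Var p)"
  have "GL_der {?H} (Imps ([] @ map Box []) (Q (Suc (length ps)) (Var p)))"
  proof (rule GL_der_Q_from_reflection_hyp[where as = "map Var ps"])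
    show "Imp (BigAnd (map (\<lambda>a. Imp (Box a) a) (map Var ps))) (Var p) \<in> {?H}"
      by (simp add: comp_def)
    show "card (set (map Var ps) - set []) \<le> length ps"
      using card_length[of "map Var ps"] by simp
  qed
  then show ?thesis
    by (intro GL_der_Qn_iff) simp
qed

end
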